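(* Let $\mathcal C=\{\mathbf s_1,\dots,\mathbf s_M\}\subseteq\{0,1\}^K$, $M\ge2$, be a binary CW code of length $K$ and weight $\omega$, used with equiprobable codewords over the Poisson channel with fixed CSI $(\bar c_{\mathrm s},\bar c_{\mathrm n})\in(0,\infty)^2$, and let $P_e^{\mathrm{code}}$ be the codeword error rate of the optimal detector. For $i\ne j$ let $d_{ij}$ be the Hamming distance between $\mathbf s_i$ and $\mathbf s_j$. Then $$P_e^{\mathrm{code}}\le\frac1M\sum_{i\ne j}\left(\tfrac12 f_{d_{ij}}(0)+\sum_{x=1}^\infty f_{d_{ij}}(x)\right),$$ where the sum is over ordered pairs $(i,j)$ with $i\neq j$ and, for $d>0$, $f_d(x)=e^{-(\lambda_1+\lambda_2)}\left(\frac{\lambda_2}{\lambda_1}\right)^{x/2}I_x\!\left(2\sqrt{\lambda_1\lambda_2}\right)$ with $\lambda_1=\frac{d(\bar c_{\mathrm s}+\bar c_{\mathrm n})}{2}$, $\lambda_2=\frac{d\,\bar c_{\mathrm n}}{2}$, and $I_x$ the modified Bessel function of the first kind of order $x$.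
   Context: A binary CW code of length $K$ and weight $\omega$ is a codebook $\mathcal C\subseteq\{0,1\}^K$ in which every codeword has exactly $\omega$ ones. Channel: given transmitted codeword $\mathbf s$, the observations $r[1],\dots,r[K]$ are independent with $r[k]$ Poisson of mean $s[k]\bar c_{\mathrm s}+\bar c_{\mathrm n}$. The optimal detector outputs a codeword maximizing the likelihood $\prod_{k}\frac{(\bar c_{\mathrm s}s[k]+\bar c_{\mathrm n})^{r[k]}e^{-\bar c_{\mathrm s}s[k]-\bar c_{\mathrm n}}}{r[k]!}$ over $\mathcal C$, ties broken uniformly at random among maximizers. The transmitted codeword is uniform on $\mathcal C$, and $P_e^{\mathrm{code}}$ is the probability that the detected codeword differs from the transmitted one. *)

theory Defs
  imports "HOL-Analysis.Analysis"
begin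

text \<open>Codebook: codewords indexed by i < M, entries s i k for k < K (True = 1).\<close>

definition cw_code :: "(nat \<Rightarrow> nat \<Rightarrow> bool) \<Rightarrow> nat \<Rightarrow> nat \<Rightarrow> nat \<Rightarrow> bool" where
  "cw_code s M K w \<longleftrightarrow>
     (\<forall>i<M. card {k. k < K \<and> s i k} = w) \<and>
     (\<forall>i<M. \<forall>j<M. i \<noteq> j \<longrightarrow> (\<exists>k<K. s i k \<noteq> s j k))"

definition hamming :: "(nat \<Rightarrow> nat \<Rightarrow> bool) \<Rightarrow> nat \<Rightarrow> nat \<Rightarrow> nat \<Rightarrow> nat" where
  "hamming s K i j = card {k. k < K \<and> s i k \<noteq> s j k}"

definition poisson_pmf_val :: "real \<Rightarrow> nat \<Rightarrow> real" where
  "poisson_pmf_val \<mu> n = \<mu> ^ n * exp (- \<mu>) / fact n"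

definition likelihood :: "real \<Rightarrow> real \<Rightarrow> (nat \<Rightarrow> nat \<Rightarrow> bool) \<Rightarrow> nat \<Rightarrow> nat \<Rightarrow> nat list \<Rightarrow> real" where
  "likelihood cs cn s K i r =
     (\<Prod>k<K. poisson_pmf_val ((if s i k then cs else 0) + cn) (r ! k))"

definition ml_set :: "real \<Rightarrow> real \<Rightarrow> (nat \<Rightarrow> nat \<Rightarrow> bool) \<Rightarrow> nat \<Rightarrow> nat \<Rightarrow> nat list \<Rightarrow> nat set" where
  "ml_set cs cn s M K r =
     {j. j < M \<and> (\<forall>l<M. likelihood cs cn s K l r \<le> likelihood cs cn s K j r)}"

text \<open>Codeword error probability of the ML detector with uniform random tie-breaking,
  equiprobable codewords: given s_i sent and r observed, the detector outputs i with
  probability [i in A(r)] / |A(r)|.\<close>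
definition Pe_code :: "real \<Rightarrow> real \<Rightarrow> (nat \<Rightarrow> nat \<Rightarrow> bool) \<Rightarrow> nat \<Rightarrow> nat \<Rightarrow> real" where
  "Pe_code cs cn s M K =
     (1 / real M) * (\<Sum>i<M. infsum (\<lambda>r. likelihood cs cn s K i r *
         (1 - (if i \<in> ml_set cs cn s M K r then 1 / real (card (ml_set cs cn s M K r)) else 0)))
       {r. length r = K})"

definition besselI :: "nat \<Rightarrow> real \<Rightarrow> real" where
  "besselI n z = (\<Sum>m. (z / 2) ^ (2 * m + n) / (fact m * fact (m + n)))"

definition f_d :: "real \<Rightarrow> real \<Rightarrow> nat \<Rightarrow> nat \<Rightarrow> real" where
  "f_d cs cn d x =
     (let l1 = real d * (cs + cn) / 2; l2 = real d * cn / 2 in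
      exp (- (l1 + l2)) * (l2 / l1) powr (real x / 2) * besselI x (2 * sqrt (l1 * l2)))"

end

theory Submission imports Defs "HOL-Probability.Probability" begin

text \<open>
  Given that s_i is sent and r observed, the detector misses i with probability 1 - 1/m if i
  is one of m maximisers of the likelihood, and 1 otherwise; as 1 - 1/m <= (m - 1)/2, both are
  at most the sum over j /= i of [L_j > L_i] + [L_j = L_i]/2. For a constant-weight code
  L_j(r) = C(r) rho^(S_j(r)) with rho = (c_s + c_n)/c_n > 1, where S_j(r) is the photon count on
  the support of s_j, so comparing L_i with L_j only involves the counts X on supp s_i - supp s_j
  and Y on supp s_j - supp s_i. Under s_i these are independent Poisson variables with means
  d(c_s + c_n)/2 and d c_n/2, and summing their joint probabilities along the diagonal
  Y = X + x yields the Bessel series f_d(x) of the Skellam distribution.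
\<close>

section \<open>Sums of independent Poisson variables\<close>

lemma poisson_pmf_add:
  assumes "a > 0" and "b > 0"
  shows "map_pmf (\<lambda>(x, y). x + y) (pair_pmf (poisson_pmf a) (poisson_pmf b)) = poisson_pmf (a + b)"
proof (rule pmf_eqI)
  fix n :: nat
  let ?P = "pair_pmf (poisson_pmf a) (poisson_pmf b)"
  have "(\<lambda>(x, y). x + y) -` {n} = (\<lambda>k. (k, n - k)) ` {..n}"
    by (auto simp: image_iff)
  then have "pmf (map_pmf (\<lambda>(x, y). x + y) ?P) n = sum (pmf ?P) ((\<lambda>k. (k, n - k)) ` {..n})"
    by (simp add: pmf_map measure_measure_pmf_finite)
  also have "\<dots> = (\<Sum>k\<le>n. pmf (poisson_pmf a) k * pmf (poisson_pmf b) (n - k))"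
    by (subst sum.reindex) (auto simp: inj_on_def pmf_pair)
  also have "\<dots> = (\<Sum>k\<le>n. of_nat (n choose k) * a ^ k * b ^ (n - k)) / fact n * exp (- (a + b))"
    unfolding sum_divide_distrib sum_distrib_right
  proof (rule sum.cong[OF refl])
    fix k assume "k \<in> {..n}"
    then have "real (n choose k) = fact n / (fact k * fact (n - k))"
      by (simp add: binomial_fact)
    then show "pmf (poisson_pmf a) k * pmf (poisson_pmf b) (n - k) =
        real (n choose k) * a ^ k * b ^ (n - k) / fact n * exp (- (a + b))"
      using assms by (simp add: field_simps exp_diff exp_minus)
  qed
  also have "\<dots> = pmf (poisson_pmf (a + b)) n"
    using assms by (simp add: binomial_ring[symmetric])
  finally show "pmf (map_pmf (\<lambda>(x, y). x + y) ?P) n = pmf (poisson_pmf (a + b)) n" .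
qed

lemma Pi_pmf_poisson_sum:
  assumes "finite A" and "A \<noteq> {}" and "\<And>k. k \<in> A \<Longrightarrow> \<mu> k > 0"
  shows "map_pmf (\<lambda>f. \<Sum>k\<in>A. f k) (Pi_pmf A (0::nat) (\<lambda>k. poisson_pmf (\<mu> k)))
       = poisson_pmf (\<Sum>k\<in>A. \<mu> k)"
  using assms
proof (induction A rule: finite_ne_induct)
  case (singleton x)
  then show ?case
    by (simp add: Pi_pmf_singleton pmf.map_comp o_def)
next
  case (insert x F)
  let ?Q = "Pi_pmf F 0 (\<lambda>k. poisson_pmf (\<mu> k))"
  have "map_pmf (\<lambda>f. \<Sum>k\<in>insert x F. f k) (Pi_pmf (insert x F) 0 (\<lambda>k. poisson_pmf (\<mu> k)))
      = map_pmf (\<lambda>(y, z). y + z) (map_pmf (\<lambda>(y, f). (y, \<Sum>k\<in>F. f k)) (pair_pmf (poisson_pmf (\<mu> x)) ?Q))"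
    using insert.hyps
    by (subst Pi_pmf_insert) (auto simp: pmf.map_comp o_def case_prod_unfold intro!: map_pmf_cong sum.cong)
  also have "\<dots> = map_pmf (\<lambda>(y, z). y + z) (pair_pmf (poisson_pmf (\<mu> x)) (poisson_pmf (\<Sum>k\<in>F. \<mu> k)))"
    using insert by (simp add: map_pair[where f = id, simplified])
  also have "\<dots> = poisson_pmf (\<mu> x + (\<Sum>k\<in>F. \<mu> k))"
    using insert by (intro poisson_pmf_add sum_pos) auto
  finally show ?case
    using insert.hyps by simp
qed

lemma Pi_pmf_poisson_sums_disjoint:
  assumes "finite S" and "A \<subseteq> S" and "B \<subseteq> S" and "A \<inter> B = {}"
    and "A \<noteq> {}" and "B \<noteq> {}" and "\<And>k. k \<in> S \<Longrightarrow> \<mu> k > 0"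
  shows "map_pmf (\<lambda>f. (\<Sum>k\<in>A. f k, \<Sum>k\<in>B. f k)) (Pi_pmf S (0::nat) (\<lambda>k. poisson_pmf (\<mu> k)))
       = pair_pmf (poisson_pmf (\<Sum>k\<in>A. \<mu> k)) (poisson_pmf (\<Sum>k\<in>B. \<mu> k))"
proof -
  let ?p = "\<lambda>k. poisson_pmf (\<mu> k)"
  have fin: "finite A" "finite B"
    using assms(1-3) finite_subset by auto
  have "Pi_pmf (A \<union> B) 0 ?p = map_pmf (\<lambda>f x. if x \<in> A \<union> B then f x else 0) (Pi_pmf S 0 ?p)"
    using assms(1-3) by (intro Pi_pmf_subset) auto
  then have "map_pmf (\<lambda>f. (\<Sum>k\<in>A. f k, \<Sum>k\<in>B. f k)) (Pi_pmf S 0 ?p)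
      = map_pmf (\<lambda>f. (\<Sum>k\<in>A. f k, \<Sum>k\<in>B. f k)) (Pi_pmf (A \<union> B) 0 ?p)"
    by (simp add: pmf.map_comp o_def)
  also have "\<dots> = map_pmf (\<lambda>(f, g). (\<Sum>k\<in>A. f k, \<Sum>k\<in>B. g k)) (pair_pmf (Pi_pmf A 0 ?p) (Pi_pmf B 0 ?p))"
    unfolding Pi_pmf_union[OF fin assms(4)] pmf.map_comp o_def using assms(4)
    by (intro map_pmf_cong refl) (auto simp: case_prod_unfold intro!: sum.cong)
  also have "\<dots> = pair_pmf (map_pmf (\<lambda>f. \<Sum>k\<in>A. f k) (Pi_pmf A 0 ?p)) (map_pmf (\<lambda>f. \<Sum>k\<in>B. f k) (Pi_pmf B 0 ?p))"
    by (rule map_pair)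
  also have "\<dots> = pair_pmf (poisson_pmf (\<Sum>k\<in>A. \<mu> k)) (poisson_pmf (\<Sum>k\<in>B. \<mu> k))"
    using fin assms(2,3,5-7) by (subst (1 2) Pi_pmf_poisson_sum) auto
  finally show ?thesis .
qed

section \<open>The Skellam probabilities as a Bessel series\<close>

definition skellam :: "real \<Rightarrow> real \<Rightarrow> nat \<Rightarrow> real" where
  "skellam l1 l2 x = exp (- (l1 + l2)) * (l2 / l1) powr (real x / 2) * besselI x (2 * sqrt (l1 * l2))"

lemma f_d_eq_skellam: "f_d cs cn d = skellam (real d * (cs + cn) / 2) (real d * cn / 2)"
  by (simp add: fun_eq_iff f_d_def skellam_def)

lemma poisson_pmf_product_eq_bessel_term:
  assumes l1: "l1 > 0" and l2: "l2 > 0"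
  shows "pmf (poisson_pmf l1) m * pmf (poisson_pmf l2) (m + x)
       = exp (- (l1 + l2)) * (l2 / l1) powr (real x / 2)
         * ((2 * sqrt (l1 * l2) / 2) ^ (2 * m + x) / (fact m * fact (m + x)))"
proof -
  have "(l2 / l1) powr (real x / 2) = ((l2 / l1) powr (1/2)) powr real x"
    by (simp add: powr_powr)
  then have powr_half: "(l2 / l1) powr (real x / 2) = sqrt (l2 / l1) ^ x"
    using l1 l2 by (simp add: powr_half_sqrt powr_realpow)
  have "sqrt (l2 / l1) * sqrt (l1 * l2) = l2"
    using l1 l2 by (simp add: real_sqrt_mult[symmetric] power2_eq_square[symmetric])
  then have "sqrt (l2 / l1) ^ x * sqrt (l1 * l2) ^ x = l2 ^ x"
    by (simp add: power_mult_distrib[symmetric])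
  moreover have "sqrt (l1 * l2) ^ (2 * m + x) = (l1 * l2) ^ m * sqrt (l1 * l2) ^ x"
    using l1 l2 by (simp add: power_add power_mult)
  ultimately show ?thesis
    using l1 l2 unfolding powr_half
    by (simp add: power_add power_mult_distrib field_simps exp_diff exp_minus)
qed

lemma prob_poisson_shift_eq_skellam:
  assumes l1: "l1 > 0" and l2: "l2 > 0"
  shows "measure_pmf.prob (pair_pmf (poisson_pmf l1) (poisson_pmf l2)) {(a, b). b = a + x}
       = skellam l1 l2 x"
proof -
  let ?P = "pair_pmf (poisson_pmf l1) (poisson_pmf l2)"
  define c where "c = exp (- (l1 + l2)) * (l2 / l1) powr (real x / 2)"
  have c: "c > 0"
    using l1 l2 by (simp add: c_def)
  have "(\<lambda>m. measure_pmf.prob ?P {(m, m + x)}) sums measure_pmf.prob ?P (\<Union>m. {(m, m + x)})"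
    by (rule measure_pmf.finite_measure_UNION) (auto simp: disjoint_family_on_def)
  moreover have "(\<Union>m. {(m, m + x)}) = {(a, b). b = a + x}"
    by auto
  ultimately have "(\<lambda>m. c * ((2 * sqrt (l1 * l2) / 2) ^ (2 * m + x) / (fact m * fact (m + x))))
      sums measure_pmf.prob ?P {(a, b). b = a + x}"
    using poisson_pmf_product_eq_bessel_term[OF l1 l2]
    by (simp add: measure_pmf_single pmf_pair c_def)
  then have "(\<lambda>m. (2 * sqrt (l1 * l2) / 2) ^ (2 * m + x) / (fact m * fact (m + x)))
      sums (measure_pmf.prob ?P {(a, b). b = a + x} / c)"
    using sums_divide[of _ _ c] c by fastforce
  then show ?thesis
    using c unfolding skellam_def c_def[symmetric] besselI_def by (simp add: sums_iff)
qed

section \<open>Pairwise comparisons with ties counted half\<close>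

definition pairwise_loss :: "'a::linorder \<Rightarrow> 'a \<Rightarrow> real" where
  "pairwise_loss a b = (if a < b then 1 else if a = b then 1/2 else 0)"

lemma pairwise_loss_bounds: "0 \<le> pairwise_loss a b" "pairwise_loss a b \<le> 1"
  by (auto simp: pairwise_loss_def)

lemma pairwise_loss_add_right:
  "pairwise_loss (a + c) (b + c) = pairwise_loss a (b :: 'a::linordered_cancel_ab_semigroup_add)"
  by (simp add: pairwise_loss_def)

lemma pairwise_loss_strict_mono:
  "strict_mono f \<Longrightarrow> pairwise_loss (f a) (f b) = pairwise_loss a b"
  by (simp add: pairwise_loss_def strict_mono_less strict_mono_eq)

lemma one_minus_inverse_le_half_pred:
  assumes "m \<ge> 1"
  shows "1 - 1 / real m \<le> (real m - 1) / 2"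
proof (cases "m = 1")
  case False
  with assms have "real m \<ge> 2"
    by linarith
  then have "(real m - 1) * (1 / real m) \<le> (real m - 1) * (1 / 2)"
    by (intro mult_left_mono) (auto simp: field_simps)
  with assms show ?thesis
    by (simp add: field_simps)
qed simp

lemma tie_break_miss_le_pairwise_loss:
  fixes v :: "nat \<Rightarrow> 'a::linorder"
  assumes i: "i < M"
  defines "A \<equiv> {j. j < M \<and> (\<forall>l<M. v l \<le> v j)}"
  shows "1 - (if i \<in> A then 1 / real (card A) else 0) \<le> (\<Sum>j\<in>{..<M} - {i}. pairwise_loss (v i) (v j))"
proof (cases "i \<in> A")
  case False
  then obtain l where l: "l < M" "v i < v l"
    using i unfolding A_def by (auto simp: not_le)
  then have "pairwise_loss (v i) (v l) \<le> (\<Sum>j\<in>{..<M} - {i}. pairwise_loss (v i) (v j))"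
    by (intro member_le_sum pairwise_loss_bounds) auto
  with l False show ?thesis
    by (simp add: pairwise_loss_def)
next
  case True
  have fin: "finite A"
    unfolding A_def by auto
  with True have card: "card A \<ge> 1"
    by (auto simp: Suc_le_eq card_gt_0_iff)
  have "(\<Sum>j\<in>{..<M} - {i}. pairwise_loss (v i) (v j)) = (\<Sum>j\<in>{..<M} - {i}. if j \<in> A then 1/2 else 0)"
    using True by (intro sum.cong) (auto simp: A_def pairwise_loss_def intro: order.trans order.antisym)
  also have "\<dots> = (\<Sum>j\<in>{j\<in>{..<M} - {i}. j \<in> A}. 1/2)"
    by (rule sum.inter_filter[symmetric]) simp
  also have "{j\<in>{..<M} - {i}. j \<in> A} = A - {i}"
    by (auto simp: A_def)
  also have "(\<Sum>j\<in>A - {i}. 1/2) = (real (card A) - 1) / 2"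
    using True fin card by (simp add: card_Diff_singleton of_nat_diff)
  also have "\<dots> \<ge> 1 - 1 / real (card A)"
    using card by (rule one_minus_inverse_le_half_pred)
  finally show ?thesis
    using True by simp
qed

lemma expectation_pairwise_loss_poisson:
  assumes l1: "l1 > 0" and l2: "l2 > 0"
  shows "measure_pmf.expectation (pair_pmf (poisson_pmf l1) (poisson_pmf l2)) (\<lambda>(a, b). pairwise_loss a b)
       = 1/2 * skellam l1 l2 0 + (\<Sum>x. skellam l1 l2 (Suc x))"
proof -
  let ?P = "pair_pmf (poisson_pmf l1) (poisson_pmf l2)"
  define D where "D = {(a::nat, b::nat). b = a}"
  define G where "G = {(a::nat, b::nat). a < b}"
  have "(\<lambda>(a, b). pairwise_loss a b) = (\<lambda>p. 1/2 * indicator D p + indicator G p)"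
    by (auto simp: fun_eq_iff pairwise_loss_def D_def G_def indicator_def)
  then have E: "measure_pmf.expectation ?P (\<lambda>(a, b). pairwise_loss a b)
      = 1/2 * measure_pmf.prob ?P D + measure_pmf.prob ?P G"
    by (simp add: integral_indicator measure_pmf.emeasure_eq_measure)
  have "(\<lambda>x. measure_pmf.prob ?P {(a, b). b = a + Suc x}) sums measure_pmf.prob ?P (\<Union>x. {(a, b). b = a + Suc x})"
    by (rule measure_pmf.finite_measure_UNION) (auto simp: disjoint_family_on_def)
  moreover have "(\<Union>x. {(a::nat, b). b = a + Suc x}) = G"
    unfolding G_def by (auto dest: less_imp_Suc_add)
  ultimately have "(\<lambda>x. skellam l1 l2 (Suc x)) sums measure_pmf.prob ?P G"
    by (simp only: prob_poisson_shift_eq_skellam[OF l1 l2])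
  with E show ?thesis
    using prob_poisson_shift_eq_skellam[OF l1 l2, of 0] unfolding D_def by (simp add: sums_iff)
qed

section \<open>The observation distribution\<close>

definition channel_mean :: "real \<Rightarrow> real \<Rightarrow> (nat \<Rightarrow> nat \<Rightarrow> bool) \<Rightarrow> nat \<Rightarrow> nat \<Rightarrow> real" where
  "channel_mean cs cn s i k = (if s i k then cs else 0) + cn"

definition observation_pmf :: "real \<Rightarrow> real \<Rightarrow> (nat \<Rightarrow> nat \<Rightarrow> bool) \<Rightarrow> nat \<Rightarrow> nat \<Rightarrow> nat list pmf" where
  "observation_pmf cs cn s K i =
     map_pmf (\<lambda>f. map f [0..<K]) (Pi_pmf {..<K} 0 (\<lambda>k. poisson_pmf (channel_mean cs cn s i k)))"

lemma pmf_map_Pi_pmf_list: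
  "pmf (map_pmf (\<lambda>f. map f [0..<K]) (Pi_pmf {..<K} dflt p)) r
     = (if length r = K then \<Prod>k<K. pmf (p k) (r ! k) else 0)"
proof -
  let ?Q = "Pi_pmf {..<K} dflt p"
  define f0 where "f0 k = (if k < K then r ! k else dflt)" for k
  have dflt: "f k = dflt" if "f \<in> set_pmf ?Q" "k \<ge> K" for f k
    using that set_Pi_pmf_subset[of "{..<K}" dflt p] by auto
  have inj: "inj_on (\<lambda>f. map f [0..<K]) (set_pmf ?Q)"
  proof (rule inj_onI, rule ext)
    fix f g k assume "f \<in> set_pmf ?Q" "g \<in> set_pmf ?Q" "map f [0..<K] = map g [0..<K]"
    then show "f k = g k"
      using dflt[of f k] dflt[of g k] by (cases "k < K") (auto simp: map_eq_conv)
  qed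
  show ?thesis
  proof (cases "length r = K")
    case True
    then have r: "r = map f0 [0..<K]"
      by (intro nth_equalityI) (auto simp: f0_def)
    have preimage: "f = f0" if "f \<in> set_pmf ?Q" "r = map f [0..<K]" for f
      using that dflt[of f] by (auto simp: f0_def fun_eq_iff not_less)
    have "pmf (map_pmf (\<lambda>f. map f [0..<K]) ?Q) r = pmf ?Q f0"
    proof (cases "f0 \<in> set_pmf ?Q")
      case False
      with preimage have "r \<notin> (\<lambda>f. map f [0..<K]) ` set_pmf ?Q"
        by blast
      with False show ?thesis
        by (simp add: pmf_map_outside set_pmf_iff)
    qed (simp add: r pmf_map_inj[OF inj])
    also have "\<dots> = (\<Prod>k<K. pmf (p k) (r ! k))"
      by (subst pmf_Pi') (auto simp: f0_def)
    finally show ?thesis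
      using True by simp
  qed (subst pmf_map_outside; auto)
qed

lemma pmf_observation_pmf:
  assumes "cs > 0" and "cn > 0"
  shows "pmf (observation_pmf cs cn s K i) r = (if length r = K then likelihood cs cn s K i r else 0)"
  using assms unfolding observation_pmf_def pmf_map_Pi_pmf_list likelihood_def
  by (auto simp: channel_mean_def poisson_pmf_val_def intro!: prod.cong)

lemma infsum_eq_measure_pmf_expectation:
  fixes g :: "'a \<Rightarrow> real"
  assumes pmf_p: "\<And>r. pmf p r = (if r \<in> A then h r else 0)" and bounded: "\<And>r. \<bar>g r\<bar> \<le> B"
  shows "infsum (\<lambda>r. h r * g r) A = measure_pmf.expectation p g"
proof -
  have "Infinite_Set_Sum.abs_summable_on (\<lambda>r. pmf p r * g r) UNIV"
  proof (rule Infinite_Set_Sum.abs_summable_on_comparison_test')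
    show "Infinite_Set_Sum.abs_summable_on (\<lambda>r. pmf p r * B) UNIV"
      by (intro Infinite_Set_Sum.abs_summable_on_cmult_left) auto
    show "norm (pmf p r * g r) \<le> pmf p r * B" for r
      using bounded[of r] by (simp add: abs_mult mult_left_mono)
  qed
  then have "measure_pmf.expectation p g = infsum (\<lambda>r. pmf p r * g r) UNIV"
    by (simp add: pmf_expectation_eq_infsetsum infsetsum_infsum)
  also have "\<dots> = infsum (\<lambda>r. h r * g r) A"
    by (rule infsum_cong_neutral) (auto simp: pmf_p)
  finally show ?thesis
    by simp
qed

lemma observation_pmf_disagreement_counts:
  fixes s :: "nat \<Rightarrow> nat \<Rightarrow> bool" and K i j :: nat
  assumes "cs > 0" and "cn > 0"
  defines "A \<equiv> {k. k < K \<and> s i k \<and> \<not> s j k}" and "B \<equiv> {k. k < K \<and> s j k \<and> \<not> s i k}"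
  assumes "A \<noteq> {}" and "B \<noteq> {}"
  shows "map_pmf (\<lambda>r. (\<Sum>k\<in>A. r ! k, \<Sum>k\<in>B. r ! k)) (observation_pmf cs cn s K i)
       = pair_pmf (poisson_pmf (real (card A) * (cs + cn))) (poisson_pmf (real (card B) * cn))"
proof -
  have "map_pmf (\<lambda>r. (\<Sum>k\<in>A. r ! k, \<Sum>k\<in>B. r ! k)) (observation_pmf cs cn s K i)
      = map_pmf (\<lambda>f. (\<Sum>k\<in>A. f k, \<Sum>k\<in>B. f k)) (Pi_pmf {..<K} 0 (\<lambda>k. poisson_pmf (channel_mean cs cn s i k)))"
    unfolding observation_pmf_def pmf.map_comp o_def
    by (intro map_pmf_cong refl) (auto simp: A_def B_def intro!: sum.cong)
  also have "\<dots> = pair_pmf (poisson_pmf (\<Sum>k\<in>A. channel_mean cs cn s i k)) (poisson_pmf (\<Sum>k\<in>B. channel_mean cs cn s i k))"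
    using assms by (intro Pi_pmf_poisson_sums_disjoint) (auto simp: channel_mean_def)
  also have "(\<Sum>k\<in>A. channel_mean cs cn s i k) = real (card A) * (cs + cn)"
    by (simp add: A_def channel_mean_def)
  also have "(\<Sum>k\<in>B. channel_mean cs cn s i k) = real (card B) * cn"
    by (simp add: B_def channel_mean_def)
  finally show ?thesis .
qed

section \<open>Likelihood comparisons for a constant-weight code\<close>

definition support_count :: "(nat \<Rightarrow> nat \<Rightarrow> bool) \<Rightarrow> nat \<Rightarrow> nat \<Rightarrow> nat list \<Rightarrow> nat" where
  "support_count s K i r = (\<Sum>k\<in>{k. k < K \<and> s i k}. r ! k)"

lemma likelihood_eq_scaled_power:
  assumes cn: "cn > 0"
  shows "likelihood cs cn s K i r
       = ((\<Prod>k<K. cn ^ (r ! k) / fact (r ! k)) * exp (- (real K * cn + real (card {k. k < K \<and> s i k}) * cs)))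
         * ((cs + cn) / cn) ^ support_count s K i r"
proof -
  define \<rho> where "\<rho> = (cs + cn) / cn"
  have factor: "poisson_pmf_val ((if s i k then cs else 0) + cn) n
      = cn ^ n / fact n * exp (- cn) * (if s i k then \<rho> ^ n * exp (- cs) else 1)" for k n
    using cn by (simp add: poisson_pmf_val_def \<rho>_def power_divide exp_diff exp_minus field_simps)
  have "likelihood cs cn s K i r
      = (\<Prod>k<K. cn ^ (r ! k) / fact (r ! k)) * (\<Prod>k<K. exp (- cn))
        * (\<Prod>k<K. if s i k then \<rho> ^ (r ! k) * exp (- cs) else 1)"
    unfolding likelihood_def factor prod.distrib ..
  also have "(\<Prod>k<K. if s i k then \<rho> ^ (r ! k) * exp (- cs) else 1)
      = (\<Prod>k\<in>{k. k < K \<and> s i k}. \<rho> ^ (r ! k) * exp (- cs))"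
    by (subst prod.inter_filter[symmetric]) (auto intro: prod.cong)
  also have "(\<Prod>k\<in>{k. k < K \<and> s i k}. \<rho> ^ (r ! k) * exp (- cs))
      = \<rho> ^ support_count s K i r * exp (- (real (card {k. k < K \<and> s i k}) * cs))"
    unfolding prod.distrib by (simp add: support_count_def power_sum exp_of_nat_mult[symmetric])
  finally show ?thesis
    unfolding \<rho>_def[symmetric] by (simp add: exp_of_nat_mult[symmetric] exp_add[symmetric] algebra_simps)
qed

lemma pairwise_loss_likelihood_eq:
  assumes cs: "cs > 0" and cn: "cn > 0"
    and same_weight: "card {k. k < K \<and> s i k} = card {k. k < K \<and> s j k}"
  shows "pairwise_loss (likelihood cs cn s K i r) (likelihood cs cn s K j r)
       = pairwise_loss (support_count s K i r) (support_count s K j r)"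
proof -
  define D where "D = (\<Prod>k<K. cn ^ (r ! k) / fact (r ! k))
    * exp (- (real K * cn + real (card {k. k < K \<and> s i k}) * cs))"
  define \<rho> where "\<rho> = (cs + cn) / cn"
  have "D > 0"
    using cn by (simp add: D_def prod_pos)
  moreover have "\<rho> > 1"
    using cs cn by (simp add: \<rho>_def)
  ultimately have mono: "strict_mono (\<lambda>n. D * \<rho> ^ n)"
    by (intro strict_monoI) (simp add: power_strict_increasing)
  have "likelihood cs cn s K l r = D * \<rho> ^ support_count s K l r" if "l \<in> {i, j}" for l
    using that same_weight likelihood_eq_scaled_power[OF cn] by (auto simp: D_def \<rho>_def)
  then show ?thesis
    using pairwise_loss_strict_mono[OF mono, of "support_count s K i r" "support_count s K j r"] by simp
qed

text \<open>Only the coordinates where exactly one of the two codewords is on matter: the common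
  support adds the same count to both sides, and equal weights make the two remaining
  supports have \<open>d/2\<close> elements each.\<close>

lemma expectation_pairwise_loss_support_count:
  assumes cs: "cs > 0" and cn: "cn > 0"
    and same_weight: "card {k. k < K \<and> s i k} = card {k. k < K \<and> s j k}"
    and distinct: "\<exists>k<K. s i k \<noteq> s j k"
  shows "measure_pmf.expectation (observation_pmf cs cn s K i)
           (\<lambda>r. pairwise_loss (support_count s K i r) (support_count s K j r))
       = 1/2 * f_d cs cn (hamming s K i j) 0 + (\<Sum>x. f_d cs cn (hamming s K i j) (Suc x))"
proof -
  define A where "A = {k. k < K \<and> s i k \<and> \<not> s j k}"
  define B where "B = {k. k < K \<and> s j k \<and> \<not> s i k}"
  define C where "C = {k. k < K \<and> s i k \<and> s j k}"
  have supp_i: "{k. k < K \<and> s i k} = A \<union> C" "A \<inter> C = {}" "finite A" "finite C"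
    and supp_j: "{k. k < K \<and> s j k} = B \<union> C" "B \<inter> C = {}" "finite B"
    by (auto simp: A_def B_def C_def)
  have card_eq: "card A = card B"
    using same_weight unfolding supp_i(1) supp_j(1)
    by (simp add: card_Un_disjoint supp_i supp_j)
  have "{k. k < K \<and> s i k \<noteq> s j k} = A \<union> B" "A \<inter> B = {}"
    by (auto simp: A_def B_def)
  then have hamming: "hamming s K i j = card A + card B"
    by (simp add: hamming_def card_Un_disjoint supp_i supp_j)
  have "A \<union> B \<noteq> {}"
    using distinct by (auto simp: A_def B_def)
  with card_eq supp_i supp_j have nonempty: "A \<noteq> {}" "B \<noteq> {}"
    by auto
  have means: "real (hamming s K i j) * (cs + cn) / 2 = real (card A) * (cs + cn)"
    "real (hamming s K i j) * cn / 2 = real (card B) * cn"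
    by (simp_all add: hamming card_eq)
  have "pairwise_loss (support_count s K i r) (support_count s K j r)
      = pairwise_loss (\<Sum>k\<in>A. r ! k) (\<Sum>k\<in>B. r ! k)" for r
    using pairwise_loss_add_right[of "\<Sum>k\<in>A. r ! k" "\<Sum>k\<in>C. r ! k" "\<Sum>k\<in>B. r ! k"]
    by (simp add: support_count_def supp_i supp_j sum.union_disjoint)
  then have "measure_pmf.expectation (observation_pmf cs cn s K i)
        (\<lambda>r. pairwise_loss (support_count s K i r) (support_count s K j r))
      = measure_pmf.expectation (map_pmf (\<lambda>r. (\<Sum>k\<in>A. r ! k, \<Sum>k\<in>B. r ! k)) (observation_pmf cs cn s K i))
          (\<lambda>(a, b). pairwise_loss a b)"
    by simp
  also have "\<dots> = measure_pmf.expectation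
      (pair_pmf (poisson_pmf (real (card A) * (cs + cn))) (poisson_pmf (real (card B) * cn)))
      (\<lambda>(a, b). pairwise_loss a b)"
    unfolding A_def B_def using cs cn nonempty
    by (subst observation_pmf_disagreement_counts) (auto simp: A_def B_def)
  also have "\<dots> = 1/2 * skellam (real (card A) * (cs + cn)) (real (card B) * cn) 0
      + (\<Sum>x. skellam (real (card A) * (cs + cn)) (real (card B) * cn) (Suc x))"
    using cs cn nonempty supp_i supp_j
    by (intro expectation_pairwise_loss_poisson) (auto simp: card_gt_0_iff)
  finally show ?thesis
    unfolding f_d_eq_skellam means .
qed

lemma ml_miss_probability_le:
  assumes cs: "cs > 0" and cn: "cn > 0" and code: "cw_code s M K w" and i: "i < M"
  shows "infsum (\<lambda>r. likelihood cs cn s K i r *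
           (1 - (if i \<in> ml_set cs cn s M K r then 1 / real (card (ml_set cs cn s M K r)) else 0)))
           {r. length r = K}
       \<le> (\<Sum>j\<in>{..<M} - {i}. 1/2 * f_d cs cn (hamming s K i j) 0 + (\<Sum>x. f_d cs cn (hamming s K i j) (Suc x)))"
proof -
  let ?L = "observation_pmf cs cn s K i"
  define miss where
    "miss r = 1 - (if i \<in> ml_set cs cn s M K r then 1 / real (card (ml_set cs cn s M K r)) else 0)" for r
  define loss where "loss j r = pairwise_loss (support_count s K i r) (support_count s K j r)" for j r
  have integrable_loss: "integrable ?L (loss j)" for j
    by (rule measure_pmf.integrable_const_bound[where B = 1])
      (simp_all add: loss_def abs_le_iff pairwise_loss_bounds order.trans[OF _ pairwise_loss_bounds(1)])
  have "\<bar>miss r\<bar> \<le> 1" for r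
  proof (cases "i \<in> ml_set cs cn s M K r")
    case True
    moreover have "finite (ml_set cs cn s M K r)"
      by (simp add: ml_set_def)
    ultimately have "card (ml_set cs cn s M K r) \<ge> 1"
      by (auto simp: Suc_le_eq card_gt_0_iff)
    then show ?thesis
      using True by (simp add: miss_def)
  qed (simp add: miss_def)
  then have "infsum (\<lambda>r. likelihood cs cn s K i r * miss r) {r. length r = K} = measure_pmf.expectation ?L miss"
    by (intro infsum_eq_measure_pmf_expectation) (simp add: pmf_observation_pmf[OF cs cn])
  also have "\<dots> \<le> measure_pmf.expectation ?L (\<lambda>r. \<Sum>j\<in>{..<M} - {i}. loss j r)"
  proof (rule integral_mono)
    show "integrable ?L miss"
      by (rule measure_pmf.integrable_const_bound[where B = 1]) (use \<open>\<And>r. \<bar>miss r\<bar> \<le> 1\<close> in auto)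
    show "integrable ?L (\<lambda>r. \<Sum>j\<in>{..<M} - {i}. loss j r)"
      by (intro Bochner_Integration.integrable_sum integrable_loss)
    fix r
    have "miss r \<le> (\<Sum>j\<in>{..<M} - {i}. pairwise_loss (likelihood cs cn s K i r) (likelihood cs cn s K j r))"
      unfolding miss_def ml_set_def using i by (rule tie_break_miss_le_pairwise_loss)
    also have "\<dots> = (\<Sum>j\<in>{..<M} - {i}. loss j r)"
      using code i unfolding loss_def cw_code_def by (intro sum.cong refl pairwise_loss_likelihood_eq cs cn) auto
    finally show "miss r \<le> (\<Sum>j\<in>{..<M} - {i}. loss j r)" .
  qed
  also have "\<dots> = (\<Sum>j\<in>{..<M} - {i}. measure_pmf.expectation ?L (loss j))"
    by (intro Bochner_Integration.integral_sum integrable_loss)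
  also have "\<dots> = (\<Sum>j\<in>{..<M} - {i}. 1/2 * f_d cs cn (hamming s K i j) 0 + (\<Sum>x. f_d cs cn (hamming s K i j) (Suc x)))"
    using code i unfolding loss_def cw_code_def
    by (intro sum.cong refl expectation_pairwise_loss_support_count cs cn) auto
  finally show ?thesis
    unfolding miss_def .
qed

theorem corollary2:
  fixes s :: "nat \<Rightarrow> nat \<Rightarrow> bool" and M K w :: nat and cs cn :: real
  assumes "M \<ge> 2"
    and "cw_code s M K w"
    and "cs > 0" and "cn > 0"
  shows "Pe_code cs cn s M K \<le>
    (1 / real M) * (\<Sum>i<M. \<Sum>j\<in>{..<M} - {i}.
       (1/2) * f_d cs cn (hamming s K i j) 0 + (\<Sum>x. f_d cs cn (hamming s K i j) (Suc x)))"
  unfolding Pe_code_def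
  using assms(2-4) by (intro mult_left_mono sum_mono ml_miss_probability_le) auto

end
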